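(* $P_{x,1}(H)=ky+k(x-1)$, and $P_{x^m,1}(H)=k(x^m-1)$ for every integer $m\neq1$.
   Context: Let $k$ be a field and $0\neq q\in k$ not a root of unity. $H=k_q[x,x^{-1},y]$ is the $k$-algebra generated by $x,x^{-1},y$ with $xx^{-1}=x^{-1}x=1$, $yx=qxy$, a Hopf algebra with $\Delta(x)=x\otimes x$, $\Delta(x^{-1})=x^{-1}\otimes x^{-1}$, $\Delta(y)=y\otimes x+1\otimes y$, $\varepsilon(x)=1$, $\varepsilon(y)=0$; $\{x^ny^m:n\in\mathbb{Z},m\in\mathbb{N}\}$ is a $k$-basis. For group-like elements $g,h$ of a coalgebra $C$, $P_{g,h}(C)=\{c\in C:\Delta(c)=c\otimes g+h\otimes c\}$. *)

theory Defs
  imports Main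
begin

text \<open>Concrete model of H = k_q[x,x^{-1},y]: an element is a finitely supported
coefficient function on the basis x^n y^m, indexed by (n,m) :: int \<times> nat.
An element of H \<otimes> H is a finitely supported function on pairs of basis indices,
the pair (p,r) standing for the basis tensor (x^p1 y^p2) \<otimes> (x^r1 y^r2).\<close>

definition supp :: "('b \<Rightarrow> 'a::zero) \<Rightarrow> 'b set" where
  "supp f = {z. f z \<noteq> 0}"

definition is_elem :: "(int \<times> nat \<Rightarrow> 'a::zero) \<Rightarrow> bool" where
  "is_elem c \<longleftrightarrow> finite (supp c)"

definition bas :: "int \<times> nat \<Rightarrow> int \<times> nat \<Rightarrow> 'a::{zero,one}" where
  "bas p = (\<lambda>z. if z = p then 1 else 0)"

text \<open>Product of basis monomials: (x^a y^b)(x^c y^d) = q^(bc) x^(a+c) y^(b+d), from yx = qxy.\<close>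
definition mon_mul :: "'a::field \<Rightarrow> int \<times> nat \<Rightarrow> int \<times> nat \<Rightarrow> 'a \<times> (int \<times> nat)" where
  "mon_mul q p r = (q powi (int (snd p) * fst r), (fst p + fst r, snd p + snd r))"

text \<open>Multiplication in the algebra H \<otimes> H ((a\<otimes>b)(c\<otimes>d) = ac \<otimes> bd), on finitely supported arguments.\<close>
definition hh_mult :: "'a::field \<Rightarrow> ((int \<times> nat) \<times> (int \<times> nat) \<Rightarrow> 'a)
    \<Rightarrow> ((int \<times> nat) \<times> (int \<times> nat) \<Rightarrow> 'a) \<Rightarrow> ((int \<times> nat) \<times> (int \<times> nat) \<Rightarrow> 'a)" where
  "hh_mult q f g = (\<lambda>(s, t). \<Sum>u\<in>supp f. \<Sum>v\<in>supp g.
      (let (e1, s') = mon_mul q (fst u) (fst v); (e2, t') = mon_mul q (snd u) (snd v)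
       in if s' = s \<and> t' = t then f u * g v * e1 * e2 else 0))"

definition hh_bas :: "int \<times> nat \<Rightarrow> int \<times> nat \<Rightarrow> (int \<times> nat) \<times> (int \<times> nat) \<Rightarrow> 'a::{zero,one}" where
  "hh_bas p r = (\<lambda>z. if z = (p, r) then 1 else 0)"

definition hh_pow :: "'a::field \<Rightarrow> ((int \<times> nat) \<times> (int \<times> nat) \<Rightarrow> 'a) \<Rightarrow> nat
    \<Rightarrow> ((int \<times> nat) \<times> (int \<times> nat) \<Rightarrow> 'a)" where
  "hh_pow q f m = (hh_mult q f ^^ m) (hh_bas (0,0) (0,0))"

text \<open>Comultiplication on basis elements, as the algebra map determined by
\<Delta>(x^{\<pm>1}) = x^{\<pm>1} \<otimes> x^{\<pm>1}, \<Delta>(y) = y \<otimes> x + 1 \<otimes> y: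
\<Delta>(x^n y^m) = (x^n \<otimes> x^n) (y \<otimes> x + 1 \<otimes> y)^m.\<close>
definition Delta_mon :: "'a::field \<Rightarrow> int \<Rightarrow> nat \<Rightarrow> ((int \<times> nat) \<times> (int \<times> nat) \<Rightarrow> 'a)" where
  "Delta_mon q n m = hh_mult q (hh_bas (n,0) (n,0))
      (hh_pow q (\<lambda>z. hh_bas (0,1) (1,0) z + hh_bas (0,0) (0,1) z) m)"

definition Delta :: "'a::field \<Rightarrow> (int \<times> nat \<Rightarrow> 'a) \<Rightarrow> ((int \<times> nat) \<times> (int \<times> nat) \<Rightarrow> 'a)" where
  "Delta q c = (\<lambda>z. \<Sum>p\<in>supp c. c p * Delta_mon q (fst p) (snd p) z)"

definition tensor :: "(int \<times> nat \<Rightarrow> 'a::field) \<Rightarrow> (int \<times> nat \<Rightarrow> 'a) \<Rightarrow> ((int \<times> nat) \<times> (int \<times> nat) \<Rightarrow> 'a)" where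
  "tensor c d = (\<lambda>(p, r). c p * d r)"

definition Pgh :: "'a::field \<Rightarrow> (int \<times> nat \<Rightarrow> 'a) \<Rightarrow> (int \<times> nat \<Rightarrow> 'a) \<Rightarrow> (int \<times> nat \<Rightarrow> 'a) set" where
  "Pgh q g h = {c. is_elem c \<and> Delta q c = (\<lambda>z. tensor c g z + tensor h c z)}"

end

theory Submission imports Defs begin

text \<open>Since (1 \<otimes> y)(y \<otimes> x) = q (y \<otimes> x)(1 \<otimes> y), the q-binomial theorem gives
  \<Delta>(x^n y^l) = \<Sum>k [l choose k]_q x^n y^k \<otimes> x^(n+k) y^(l-k).
  Compare coefficients in \<Delta>(c) = c \<otimes> x^m + 1 \<otimes> c. At y \<otimes> x y^(l-1) one finds
  [l]_q c(y^l) = 0, and [l]_q = (q^l - 1)/(q - 1) \<noteq> 0 because q is not a root of unity, so c has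
  no y^l with l \<ge> 2. At x^a \<otimes> x^a y^l and x^a \<otimes> x^a all other monomials except 1, x^m and y
  are excluded; at y \<otimes> x, y is excluded unless m = 1; at 1 \<otimes> x^m, c(1) = -c(x^m).\<close>

definition hh_mult_summand :: "'a::field \<Rightarrow> ((int \<times> nat) \<times> (int \<times> nat) \<Rightarrow> 'a)
    \<Rightarrow> ((int \<times> nat) \<times> (int \<times> nat) \<Rightarrow> 'a) \<Rightarrow> int \<times> nat \<Rightarrow> int \<times> nat
    \<Rightarrow> (int \<times> nat) \<times> (int \<times> nat) \<Rightarrow> (int \<times> nat) \<times> (int \<times> nat) \<Rightarrow> 'a" where
  "hh_mult_summand q f g s t u v =
     (let (e1, s') = mon_mul q (fst u) (fst v); (e2, t') = mon_mul q (snd u) (snd v)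
      in if s' = s \<and> t' = t then f u * g v * e1 * e2 else 0)"

lemma hh_mult_summand_eq:
  "hh_mult_summand q f g s t u v =
     (if (fst (fst u) + fst (fst v), snd (fst u) + snd (fst v)) = s
       \<and> (fst (snd u) + fst (snd v), snd (snd u) + snd (snd v)) = t
      then f u * g v * q powi (int (snd (fst u)) * fst (fst v)) * q powi (int (snd (snd u)) * fst (snd v))
      else 0)"
  by (simp add: hh_mult_summand_def mon_mul_def Let_def)

lemma hh_mult_eq_sum_over:
  assumes "finite S" "finite T" "supp f \<subseteq> S" "supp g \<subseteq> T"
  shows "hh_mult q f g (s, t) = (\<Sum>u\<in>S. \<Sum>v\<in>T. hh_mult_summand q f g s t u v)"
proof -
  have zero_f: "hh_mult_summand q f g s t u v = 0" if "u \<notin> supp f" for u v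
    using that by (simp add: hh_mult_summand_eq supp_def)
  have zero_g: "hh_mult_summand q f g s t u v = 0" if "v \<notin> supp g" for u v
    using that by (simp add: hh_mult_summand_eq supp_def)
  have "hh_mult q f g (s, t) = (\<Sum>u\<in>supp f. \<Sum>v\<in>supp g. hh_mult_summand q f g s t u v)"
    by (simp add: hh_mult_def hh_mult_summand_def)
  also have "\<dots> = (\<Sum>u\<in>supp f. \<Sum>v\<in>T. hh_mult_summand q f g s t u v)"
    by (intro sum.cong refl sum.mono_neutral_left assms) (auto simp: zero_g)
  also have "\<dots> = (\<Sum>u\<in>S. \<Sum>v\<in>T. hh_mult_summand q f g s t u v)"
    by (intro sum.mono_neutral_left assms) (auto simp: zero_f)
  finally show ?thesis .
qed

lemma finite_supp_hh_bas: "finite (supp (hh_bas p r :: _ \<Rightarrow> 'a::{zero,one}))"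
  by (rule finite_subset[of _ "{(p, r)}"]) (auto simp: supp_def hh_bas_def)

text \<open>The q-powers come from moving the y's of the basis tensor past the x's of g.\<close>
lemma hh_mult_hh_bas_left:
  assumes "finite (supp g)"
  shows "hh_mult q (hh_bas (a, k) (b, j)) g ((s, m), (t, n)) =
    (if k \<le> m \<and> j \<le> n
     then q powi (int k * (s - a)) * q powi (int j * (t - b)) * g ((s - a, m - k), (t - b, n - j))
     else 0)"
proof -
  let ?u = "((a, k), (b, j))" and ?v = "((s - a, m - k), (t - b, n - j))"
  have "supp (hh_bas (a, k) (b, j) :: _ \<Rightarrow> 'a) \<subseteq> {?u}" "supp g \<subseteq> insert ?v (supp g)"
    by (auto simp: supp_def hh_bas_def)
  then have "hh_mult q (hh_bas (a, k) (b, j)) g ((s, m), (t, n)) =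
      (\<Sum>v\<in>insert ?v (supp g). hh_mult_summand q (hh_bas (a, k) (b, j)) g (s, m) (t, n) ?u v)"
    using hh_mult_eq_sum_over[of "{?u}" "insert ?v (supp g)"] assms by simp
  also have "\<dots> = (\<Sum>v\<in>insert ?v (supp g). if v = ?v then
      (if k \<le> m \<and> j \<le> n
       then q powi (int k * (s - a)) * q powi (int j * (t - b)) * g ?v else 0) else 0)"
    by (intro sum.cong refl) (auto simp: hh_mult_summand_eq hh_bas_def)
  also have "\<dots> = (if k \<le> m \<and> j \<le> n
       then q powi (int k * (s - a)) * q powi (int j * (t - b)) * g ?v else 0)"
    using assms by (simp add: sum.delta)
  finally show ?thesis .
qed

lemma hh_mult_add_left:
  assumes "finite (supp f)" "finite (supp g)" "finite (supp h)"
  shows "hh_mult q (\<lambda>z. f z + g z) h = (\<lambda>z. hh_mult q f h z + hh_mult q g h z)"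
proof (rule ext, clarify)
  fix s t
  let ?S = "supp f \<union> supp g"
  have sub: "supp (\<lambda>z. f z + g z) \<subseteq> ?S" by (auto simp: supp_def)
  have "hh_mult q (\<lambda>z. f z + g z) h (s, t) =
      (\<Sum>u\<in>?S. \<Sum>v\<in>supp h. hh_mult_summand q (\<lambda>z. f z + g z) h s t u v)"
    using assms by (intro hh_mult_eq_sum_over sub) auto
  also have "\<dots> =
      (\<Sum>u\<in>?S. \<Sum>v\<in>supp h. hh_mult_summand q f h s t u v + hh_mult_summand q g h s t u v)"
    by (intro sum.cong refl) (simp add: hh_mult_summand_eq distrib_right)
  also have "\<dots> = hh_mult q f h (s, t) + hh_mult q g h (s, t)"
    using assms by (simp add: sum.distrib hh_mult_eq_sum_over[of ?S "supp h"])
  finally show "hh_mult q (\<lambda>z. f z + g z) h (s, t) = hh_mult q f h (s, t) + hh_mult q g h (s, t)" .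
qed

text \<open>Gaussian binomial coefficients, via the recursion coming from multiplying by
  y \<otimes> x + 1 \<otimes> y on the left.\<close>
fun qbinom :: "'a::field \<Rightarrow> nat \<Rightarrow> nat \<Rightarrow> 'a" where
  "qbinom q 0 k = (if k = 0 then 1 else 0)"
| "qbinom q (Suc l) k = (if k = 0 then 0 else qbinom q l (k - 1)) + q ^ k * qbinom q l k"

lemma qbinom_eq_0: "l < k \<Longrightarrow> qbinom q l k = 0"
  by (induction l arbitrary: k) auto

lemma qbinom_0_right [simp]: "qbinom q l 0 = 1"
  by (induction l) auto

lemma qbinom_1: "(q - 1) * qbinom q l 1 = q ^ l - 1"
  by (induction l) (simp_all add: algebra_simps)

lemma qbinom_1_nonzero:
  assumes "\<forall>n::nat. n > 0 \<longrightarrow> q ^ n \<noteq> 1" "l > 0"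
  shows "qbinom q l 1 \<noteq> 0"
  using qbinom_1[of q l] assms by auto

abbreviation Delta_y :: "(int \<times> nat) \<times> (int \<times> nat) \<Rightarrow> 'a::field" where
  "Delta_y \<equiv> \<lambda>z. hh_bas (0, 1) (1, 0) z + hh_bas (0, 0) (0, 1) z"

text \<open>The q-binomial expansion
  (y \<otimes> x + 1 \<otimes> y)^l = \<Sum>k. qbinom q l k \<cdot> y^k \<otimes> x^k y^(l-k).\<close>
definition Delta_y_pow :: "'a::field \<Rightarrow> nat \<Rightarrow> (int \<times> nat) \<times> (int \<times> nat) \<Rightarrow> 'a" where
  "Delta_y_pow q l = (\<lambda>((a, k), (b, j)).
     if a = 0 \<and> b = int k \<and> k + j = l then qbinom q l k else 0)"

lemma finite_supp_Delta_y_pow: "finite (supp (Delta_y_pow q l))"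
proof (rule finite_subset)
  show "supp (Delta_y_pow q l) \<subseteq> (\<lambda>k. ((0, k), (int k, l - k))) ` {..l}"
    by (auto simp: supp_def Delta_y_pow_def split: if_splits)
qed simp

lemma Delta_y_pow_Suc:
  "Delta_y_pow q (Suc l) ((a, k), (b, j)) =
     (if 1 \<le> k then q powi a * Delta_y_pow q l ((a, k - 1), (b - 1, j)) else 0)
   + (if 1 \<le> j then q powi b * Delta_y_pow q l ((a, k), (b, j - 1)) else 0)"
proof (cases "a = 0 \<and> b = int k \<and> k + j = Suc l")
  case True
  then have a: "a = 0" and b: "b = int k" and kj: "k + j = Suc l" by auto
  have "q powi b = q ^ k" using b by simp
  then show ?thesis
    using a b kj by (cases k; cases j) (auto simp: Delta_y_pow_def qbinom_eq_0)
next
  case False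
  then show ?thesis
    by (auto simp: Delta_y_pow_def)
qed

lemma hh_pow_Delta_y: "hh_pow q Delta_y l = Delta_y_pow q l"
proof (induction l)
  case 0
  show ?case by (auto simp: hh_pow_def Delta_y_pow_def hh_bas_def)
next
  case (Suc l)
  have "hh_pow q Delta_y (Suc l) = hh_mult q Delta_y (Delta_y_pow q l)"
    using Suc by (simp add: hh_pow_def)
  also have "\<dots> = Delta_y_pow q (Suc l)"
    by (auto simp: hh_mult_add_left finite_supp_hh_bas finite_supp_Delta_y_pow
        hh_mult_hh_bas_left Delta_y_pow_Suc)
  finally show ?case .
qed

lemma Delta_mon_eq:
  "Delta_mon q n l ((a, k), (b, j)) =
     (if a = n \<and> b = n + int k \<and> k + j = l then qbinom q l k else 0)"
  unfolding Delta_mon_def hh_pow_Delta_y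
  by (simp add: hh_mult_hh_bas_left finite_supp_Delta_y_pow) (auto simp: Delta_y_pow_def)

lemma Delta_eq:
  assumes "is_elem c"
  shows "Delta q c ((a, k), (b, j)) = (if b = a + int k then c (a, k + j) * qbinom q (k + j) k else 0)"
proof -
  have "Delta q c ((a, k), (b, j)) = (\<Sum>p\<in>supp c. if p = (a, k + j)
      then c p * (if b = a + int k then qbinom q (k + j) k else 0) else 0)"
    unfolding Delta_def by (intro sum.cong refl) (auto simp: Delta_mon_eq)
  also have "\<dots> = (if b = a + int k then c (a, k + j) * qbinom q (k + j) k else 0)"
    using assms by (auto simp: is_elem_def supp_def sum.delta)
  finally show ?thesis .
qed

lemma mem_Pgh_iff:
  "c \<in> Pgh q g h \<longleftrightarrow> is_elem c \<and>
     (\<forall>a k b j. (if b = a + int k then c (a, k + j) * qbinom q (k + j) k else 0)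
        = c (a, k) * g (b, j) + h (a, k) * c (b, j))"
proof -
  have "c \<in> Pgh q g h \<longleftrightarrow> is_elem c \<and>
      (\<forall>a k b j. Delta q c ((a, k), (b, j)) = c (a, k) * g (b, j) + h (a, k) * c (b, j))"
    by (simp add: Pgh_def tensor_def fun_eq_iff)
  also have "\<dots> \<longleftrightarrow> is_elem c \<and>
     (\<forall>a k b j. (if b = a + int k then c (a, k + j) * qbinom q (k + j) k else 0)
        = c (a, k) * g (b, j) + h (a, k) * c (b, j))"
    by (rule conj_cong[OF refl]) (simp add: Delta_eq)
  finally show ?thesis .
qed

lemma Pgh_x_power_elem_eq:
  assumes q: "\<forall>n::nat. n > 0 \<longrightarrow> q ^ n \<noteq> 1"
    and c: "c \<in> Pgh q (bas (m, 0)) (bas (0, 0))"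
  shows "c = (\<lambda>z. (if m = 1 then c (0, 1) else 0) * bas (0, 1) z
                 + c (m, 0) * (bas (m, 0) z - bas (0, 0) z))"
proof -
  have E: "(if b = a + int k then c (a, k + j) * qbinom q (k + j) k else 0)
        = c (a, k) * bas (m, 0) (b, j) + bas (0, 0) (a, k) * c (b, j)" for a k b j
    using c unfolding mem_Pgh_iff by blast
  have mixed: "c (a, l) = 0" if "a \<noteq> 0" "l \<noteq> 0" for a l
    using E[of a a 0 l] that by (simp add: bas_def)
  have y_power: "c (0, l) = 0" if "l \<ge> 2" for l
  proof -
    have "c (0, l) * qbinom q l 1 = 0"
      using E[of 1 0 1 "l - 1"] that by (simp add: bas_def)
    moreover have "qbinom q l 1 \<noteq> 0" using qbinom_1_nonzero[OF q] that by simp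
    ultimately show ?thesis by simp
  qed
  have y: "c (0, 1) = 0" if "m \<noteq> 1"
    using E[of 1 0 1 0] that by (simp add: bas_def)
  have x_power: "c (a, 0) = 0" if "a \<noteq> 0" "a \<noteq> m" for a
    using E[of a a 0 0] that by (simp add: bas_def)
  have unit: "c (0, 0) = - c (m, 0)" if "m \<noteq> 0"
    using E[of m 0 0 0] that by (simp add: bas_def eq_neg_iff_add_eq_0)
  have unit_if_0: "c (0, 0) = 0" if "m = 0"
  proof -
    have "c (0, 0) = c (0, 0) + c (0, 0)"
      using E[of 0 0 0 0] that by (simp add: bas_def del: add_cancel_left_right)
    then show ?thesis by (metis add_cancel_left_right)
  qed
  show ?thesis
  proof (rule ext, clarify)
    fix a :: int and l :: nat
    consider "l = 0" | "l = 1" | "l \<ge> 2" by linarith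
    then show "c (a, l) = (if m = 1 then c (0, 1) else 0) * bas (0, 1) (a, l)
                 + c (m, 0) * (bas (m, 0) (a, l) - bas (0, 0) (a, l))"
    proof cases
      case 1
      then show ?thesis
        by (cases "a = 0"; cases "m = 0"; cases "a = m") (auto simp: bas_def x_power unit unit_if_0)
    next
      case 2
      then show ?thesis
        by (cases "a = 0"; cases "m = 1") (auto simp: bas_def mixed y y[simplified])
    next
      case 3
      then show ?thesis
        by (cases "a = 0") (auto simp: bas_def mixed y_power)
    qed
  qed
qed

lemma Pgh_x_power_memI:
  assumes "m = 1 \<or> A = 0"
  shows "(\<lambda>z. A * bas (0, 1) z + B * (bas (m, 0) z - bas (0, 0) z)) \<in> Pgh q (bas (m, 0)) (bas (0, 0))"
proof -
  define c where "c = (\<lambda>z. A * bas (0, 1) z + B * (bas (m, 0) z - bas (0, 0) z))"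
  have high_y_power: "c (a, l) = 0" if "l \<ge> 2" for a l
    using that by (simp add: c_def bas_def)
  have "is_elem c"
    unfolding is_elem_def
    by (rule finite_subset[of _ "{(0, 1), (m, 0), (0, 0)}"]) (auto simp: supp_def c_def bas_def)
  moreover have "(if b = a + int k then c (a, k + j) * qbinom q (k + j) k else 0)
        = c (a, k) * bas (m, 0) (b, j) + bas (0, 0) (a, k) * c (b, j)" for a k b j
  proof -
    consider "k + j \<ge> 2" | "k = 1" "j = 0" | "k = 0" "j = 1" | "k = 0" "j = 0" by linarith
    then show ?thesis
    proof cases
      case 1
      then show ?thesis
        by (cases "j = 0"; cases "k = 0") (auto simp: high_y_power bas_def)
    next
      case 2
      then show ?thesis
        using assms by (cases "a = 0"; cases "b = 1") (auto simp: c_def bas_def)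
    next
      case 3
      then show ?thesis
        by (cases "a = 0"; cases "b = 0"; cases "a = b") (auto simp: c_def bas_def)
    next
      case 4
      then show ?thesis
        by (cases "a = 0"; cases "b = 0"; cases "a = b"; cases "a = m"; cases "b = m"; cases "m = 0")
           (auto simp: c_def bas_def algebra_simps)
    qed
  qed
  ultimately show ?thesis
    unfolding c_def[symmetric] mem_Pgh_iff by blast
qed

lemma Pgh_x_power:
  assumes "\<forall>n::nat. n > 0 \<longrightarrow> q ^ n \<noteq> 1"
  shows "Pgh q (bas (m, 0)) (bas (0, 0)) =
    {\<lambda>z. A * bas (0, 1) z + B * (bas (m, 0) z - bas (0, 0) z) | A B. m = 1 \<or> A = 0}"
proof (intro equalityI subsetI)
  fix c assume "c \<in> Pgh q (bas (m, 0)) (bas (0, 0))"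
  with Pgh_x_power_elem_eq[OF assms] show
    "c \<in> {\<lambda>z. A * bas (0, 1) z + B * (bas (m, 0) z - bas (0, 0) z) | A B. m = 1 \<or> A = 0}"
    by (intro CollectI exI[of _ "if m = 1 then c (0, 1) else 0"] exI[of _ "c (m, 0)"]) simp
next
  fix c :: "int \<times> nat \<Rightarrow> 'a"
  assume "c \<in> {\<lambda>z. A * bas (0, 1) z + B * (bas (m, 0) z - bas (0, 0) z) | A B. m = 1 \<or> A = 0}"
  then show "c \<in> Pgh q (bas (m, 0)) (bas (0, 0))"
    using Pgh_x_power_memI by blast
qed

theorem lemma2p6:
  fixes q :: "'a::field"
  assumes "q \<noteq> 0" and "\<forall>n::nat. n > 0 \<longrightarrow> q ^ n \<noteq> 1"
  shows "Pgh q (bas (1,0)) (bas (0,0))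
           = {c. \<exists>a b. c = (\<lambda>z. a * bas (0,1) z + b * (bas (1,0) z - bas (0,0) z))}
       \<and> (\<forall>m::int. m \<noteq> 1 \<longrightarrow>
           Pgh q (bas (m,0)) (bas (0,0)) = {c. \<exists>b. c = (\<lambda>z. b * (bas (m,0) z - bas (0,0) z))})"
proof (intro conjI allI impI)
  show "Pgh q (bas (1,0)) (bas (0,0))
      = {c. \<exists>a b. c = (\<lambda>z. a * bas (0,1) z + b * (bas (1,0) z - bas (0,0) z))}"
    unfolding Pgh_x_power[OF assms(2)] by auto
next
  fix m :: int assume "m \<noteq> 1"
  then show "Pgh q (bas (m,0)) (bas (0,0)) = {c. \<exists>b. c = (\<lambda>z. b * (bas (m,0) z - bas (0,0) z))}"
    unfolding Pgh_x_power[OF assms(2)] by auto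
qed

end
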